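(* For any real number field $K$ and any $a,b\in K$ with $a>0$ and $b\neq 0$, there exist $x,y,z,u,v,w\in K$ satisfying $$x^2 - ay^2 + au^2 - bv^2 + abw^2 = 0,\qquad z^2 - 4 = au^2,\qquad \mathbb{Q}\left(x,\tfrac{y}{u},z\right) = K,$$ and $$u\neq 0,\quad x + \frac{yz}{2u} > 2,\quad \frac{y}{u}>1,\quad z>2,\quad abw^2 - bv^2 > 4.$$
   Context: A real number field is a field $K\subset\mathbb{R}$ with $[K:\mathbb{Q}]<\infty$. *)

theory Defs
  imports Complex_Main
begin

definition real_subfield :: "real set \<Rightarrow> bool" where
  "real_subfield F \<longleftrightarrow> 0 \<in> F \<and> 1 \<in> F \<and>
     (\<forall>x\<in>F. \<forall>y\<in>F. x + y \<in> F \<and> x * y \<in> F) \<and>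
     (\<forall>x\<in>F. - x \<in> F) \<and> (\<forall>x\<in>F. x \<noteq> 0 \<longrightarrow> inverse x \<in> F)"

text \<open>A real number field: a subfield K of R with [K:Q] finite, i.e. K is spanned
  as a Q-vector space by finitely many of its elements.\<close>
definition real_number_field :: "real set \<Rightarrow> bool" where
  "real_number_field K \<longleftrightarrow> real_subfield K \<and>
     (\<exists>B. finite B \<and> B \<subseteq> K \<and>
        K = {r. \<exists>c. (\<forall>s\<in>B. c s \<in> \<rat>) \<and> r = (\<Sum>s\<in>B. c s * s)})"

definition gen_field :: "real set \<Rightarrow> real set" where
  "gen_field S = \<Inter> {F. real_subfield F \<and> S \<subseteq> F}"

end

theory Submission
  imports Defs "HOL-Computational_Algebra.Computational_Algebra" "HOL-Computational_Algebra.Field_as_Ring"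
begin

text \<open>
  By the primitive element theorem \<open>K = \<rat>(\<theta>)\<close>. The second equation is solved inside
  \<open>\<rat>(a)\<close> by a rational point of the conic \<open>z\<^sup>2 - a u\<^sup>2 = 4\<close>, which makes \<open>u\<close> a rational
  multiple of \<open>z - 2\<close>. Writing \<open>c\<close> for the positive one of \<open>a b\<close>, \<open>-b\<close>, the first equation
  becomes \<open>x\<^sup>2 - a y\<^sup>2 + a u\<^sup>2 + c W\<^sup>2 = 0\<close>; putting \<open>y = u + p\<close>, \<open>x = n p\<close>, \<open>W = m p\<close> it
  is solved by \<open>p = 2 a u / (n\<^sup>2 + c m\<^sup>2 - a)\<close>, and \<open>n\<close> is taken in \<open>\<theta> + \<rat>\<close> so that
  \<open>\<theta>\<close> can be read off from \<open>n = x / p\<close>. Choosing \<open>(n, m)\<close> just outside the ellipse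
  \<open>n\<^sup>2 + c m\<^sup>2 = a\<close> makes \<open>p\<close> and \<open>W\<close> as large as the inequalities require.
\<close>

section \<open>Subfields of the reals\<close>

context
  fixes F :: "real set"
  assumes F: "real_subfield F"
begin

lemma subfield_zero: "0 \<in> F"
  using F unfolding real_subfield_def by blast

lemma subfield_one: "1 \<in> F"
  using F unfolding real_subfield_def by blast

lemma subfield_add: "x \<in> F \<Longrightarrow> y \<in> F \<Longrightarrow> x + y \<in> F"
  using F unfolding real_subfield_def by blast

lemma subfield_mult: "x \<in> F \<Longrightarrow> y \<in> F \<Longrightarrow> x * y \<in> F"
  using F unfolding real_subfield_def by blast

lemma subfield_uminus: "x \<in> F \<Longrightarrow> - x \<in> F"
  using F unfolding real_subfield_def by blast

lemma subfield_inverse: "x \<in> F \<Longrightarrow> inverse x \<in> F"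
  using F subfield_zero unfolding real_subfield_def by (cases "x = 0") auto

lemma subfield_diff: "x \<in> F \<Longrightarrow> y \<in> F \<Longrightarrow> x - y \<in> F"
  using subfield_add[of x "- y"] subfield_uminus[of y] by simp

lemma subfield_divide: "x \<in> F \<Longrightarrow> y \<in> F \<Longrightarrow> x / y \<in> F"
  using subfield_mult[of x "inverse y"] subfield_inverse[of y] by (simp add: divide_inverse)

lemma subfield_power: "x \<in> F \<Longrightarrow> x ^ n \<in> F"
  by (induction n) (auto intro: subfield_one subfield_mult)

lemma subfield_of_nat: "of_nat n \<in> F"
  by (induction n) (auto intro: subfield_zero subfield_one subfield_add)

lemma subfield_numeral: "numeral k \<in> F"
  using subfield_of_nat[of "numeral k"] by simp

lemma subfield_of_int: "of_int n \<in> F"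
proof (cases "n \<ge> 0")
  case True
  then show ?thesis using subfield_of_nat[of "nat n"] by simp
next
  case False
  then show ?thesis using subfield_uminus[OF subfield_of_nat[of "nat (- n)"]] by simp
qed

lemma subfield_Rats: "x \<in> \<rat> \<Longrightarrow> x \<in> F"
  by (erule Rats_cases') (auto intro: subfield_divide subfield_of_int)

end

lemmas subfield_closed =
  subfield_zero subfield_one subfield_numeral subfield_of_nat subfield_add subfield_mult
  subfield_uminus subfield_diff subfield_divide subfield_power

lemma real_subfield_Rats: "real_subfield \<rat>"
  unfolding real_subfield_def by auto

lemma real_subfield_Inter: "(\<And>F. F \<in> \<F> \<Longrightarrow> real_subfield F) \<Longrightarrow> real_subfield (\<Inter>\<F>)"
  unfolding real_subfield_def by blast

lemma gen_field_eq_hull: "gen_field S = real_subfield hull S"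
  unfolding gen_field_def hull_def ..

lemma real_subfield_gen_field: "real_subfield (gen_field S)"
  unfolding gen_field_eq_hull by (rule hull_in) (use real_subfield_Inter in blast)

lemma gen_field_subset_iff: "real_subfield F \<Longrightarrow> gen_field S \<subseteq> F \<longleftrightarrow> S \<subseteq> F"
  unfolding gen_field_eq_hull by (rule subset_hull)

lemma subset_gen_field: "S \<subseteq> gen_field S"
  unfolding gen_field_eq_hull by (rule hull_subset)

lemma gen_field_mono: "S \<subseteq> T \<Longrightarrow> gen_field S \<subseteq> gen_field T"
  unfolding gen_field_eq_hull by (rule hull_mono)

lemma gen_field_subsetD: "x \<in> gen_field S \<Longrightarrow> S \<subseteq> F \<Longrightarrow> real_subfield F \<Longrightarrow> x \<in> F"
  using gen_field_subset_iff by blast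

lemma gen_field_eq_if_generator:
  assumes K: "real_subfield K" and "K = gen_field {\<theta>}" "S \<subseteq> K" "\<theta> \<in> gen_field S"
  shows "gen_field S = K"
proof (rule subset_antisym)
  show "gen_field S \<subseteq> K"
    using assms(3) gen_field_subset_iff[OF K] by blast
  show "K \<subseteq> gen_field S"
    unfolding assms(2) using assms(4) gen_field_subset_iff[OF real_subfield_gen_field] by simp
qed

lemma real_number_field_imp_subfield: "real_number_field K \<Longrightarrow> real_subfield K"
  by (simp add: real_number_field_def)

section \<open>Polynomials with coefficients in a subfield\<close>

definition poly_over :: "real set \<Rightarrow> real poly \<Rightarrow> bool" where
  "poly_over F p \<longleftrightarrow> (\<forall>i. coeff p i \<in> F)"

context
  fixes F :: "real set"
  assumes F: "real_subfield F"
begin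

lemma poly_over_0: "poly_over F 0"
  unfolding poly_over_def using subfield_zero[OF F] by simp

lemma poly_over_Rats: "poly_over \<rat> p \<Longrightarrow> poly_over F p"
  unfolding poly_over_def using subfield_Rats[OF F] by blast

lemma poly_over_pCons: "a \<in> F \<Longrightarrow> poly_over F p \<Longrightarrow> poly_over F (pCons a p)"
  unfolding poly_over_def by (auto simp: coeff_pCons split: nat.splits)

lemma poly_over_monom: "a \<in> F \<Longrightarrow> poly_over F (monom a n)"
  unfolding poly_over_def using subfield_zero[OF F] by (simp add: coeff_monom)

lemma poly_over_smult: "a \<in> F \<Longrightarrow> poly_over F p \<Longrightarrow> poly_over F (smult a p)"
  unfolding poly_over_def using subfield_mult[OF F] by simp

lemma poly_over_diff: "poly_over F p \<Longrightarrow> poly_over F q \<Longrightarrow> poly_over F (p - q)"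
  unfolding poly_over_def using subfield_diff[OF F] by simp

lemma poly_over_mult: "poly_over F p \<Longrightarrow> poly_over F q \<Longrightarrow> poly_over F (p * q)"
  unfolding poly_over_def
  using coeff_mult_semiring_closed[of F p q] subfield_zero[OF F] subfield_add[OF F] subfield_mult[OF F]
  by blast

lemma poly_over_pcompose: "poly_over F p \<Longrightarrow> poly_over F q \<Longrightarrow> poly_over F (pcompose p q)"
  unfolding poly_over_def
  using coeff_pcompose_semiring_closed[of F p q] subfield_zero[OF F] subfield_add[OF F] subfield_mult[OF F]
  by blast

lemma poly_over_pderiv: "poly_over F p \<Longrightarrow> poly_over F (pderiv p)"
  unfolding poly_over_def coeff_pderiv using subfield_mult[OF F] subfield_of_nat[OF F]
  by (metis of_nat_Suc)

lemma poly_over_mod: "poly_over F p \<Longrightarrow> poly_over F q \<Longrightarrow> poly_over F (p mod q)"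
proof (induction "degree p" arbitrary: p rule: less_induct)
  case less
  show ?case
  proof (cases "q = 0 \<or> p = 0 \<or> degree p < degree q")
    case True
    then show ?thesis using less.prems poly_over_0 by (auto simp: mod_poly_less)
  next
    case False
    then have "q \<noteq> 0" "p \<noteq> 0" and deg: "degree q \<le> degree p" by auto
    define t where "t = monom (lead_coeff p / lead_coeff q) (degree p - degree q) * q"
    have "poly_over F (p - t)"
      unfolding t_def using less.prems
      by (intro poly_over_diff poly_over_mult poly_over_monom subfield_divide[OF F])
         (auto simp: poly_over_def)
    moreover have "degree t \<le> degree p"
      unfolding t_def using deg degree_monom_le[of "lead_coeff p / lead_coeff q" "degree p - degree q"]
      by (intro order_trans[OF degree_mult_le]) simp
    then have "degree (p - t) \<le> degree p"
      by (meson degree_diff_le le_refl)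
    moreover have "coeff (p - t) (degree p) = 0"
      unfolding t_def using deg \<open>q \<noteq> 0\<close> by (simp add: coeff_monom_mult)
    ultimately have "poly_over F ((p - t) mod q)"
      using less.hyps less.prems(2) poly_over_0
      by (metis le_neq_implies_less leading_coeff_0_iff mod_0)
    moreover have "(p - t) mod q = p mod q"
      unfolding t_def by (metis diff_add_cancel mod_mult_self1)
    ultimately show ?thesis by simp
  qed
qed

lemma poly_over_gcd: "poly_over F p \<Longrightarrow> poly_over F q \<Longrightarrow> poly_over F (gcd p q)"
proof (induction "if q = 0 then 0 else Suc (degree q)" arbitrary: p q rule: less_induct)
  case less
  show ?case
  proof (cases "q = 0")
    case True
    then have "gcd p q = smult (inverse (lead_coeff p)) p"
      by (simp add: normalize_poly_eq_map_poly smult_conv_map_poly field_simps)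
    then show ?thesis
      using less.prems poly_over_smult subfield_inverse[OF F] unfolding poly_over_def by auto
  next
    case False
    then have "poly_over F (gcd q (p mod q))"
      using degree_mod_less[OF False, of p] less by (intro less.hyps poly_over_mod) auto
    then show ?thesis by (simp add: gcd.commute[of p q] False)
  qed
qed

end

lemma exists_rat_poly_simple_root:
  assumes "algebraic \<beta>"
  obtains g where "poly_over \<rat> g" "g \<noteq> 0" "poly g \<beta> = 0" "poly (pderiv g) \<beta> \<noteq> 0"
proof -
  define P where "P g \<longleftrightarrow> poly_over \<rat> g \<and> g \<noteq> 0 \<and> poly g \<beta> = 0" for g
  obtain g where g: "P g" and minimal: "\<And>g'. P g' \<Longrightarrow> degree g \<le> degree g'"
    using assms ex_has_least_nat[of P _ degree] unfolding algebraic_altdef P_def poly_over_def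
    by metis
  have "poly (pderiv g) \<beta> \<noteq> 0"
  proof
    assume root: "poly (pderiv g) \<beta> = 0"
    have "degree g \<noteq> 0"
      using g unfolding P_def by (metis degree_0_id pCons_eq_0_iff poly_const_conv)
    then have "pderiv g \<noteq> 0" and "degree (pderiv g) < degree g"
      by (simp_all add: pderiv_eq_0_iff degree_pderiv)
    moreover have "poly_over \<rat> (pderiv g)"
      using g poly_over_pderiv[OF real_subfield_Rats] unfolding P_def by blast
    ultimately show False
      using minimal[of "pderiv g"] root unfolding P_def by linarith
  qed
  then show thesis using g that unfolding P_def by blast
qed

section \<open>Primitive elements\<close>

abbreviation cpoly :: "real poly \<Rightarrow> complex poly" where
  "cpoly p \<equiv> map_poly complex_of_real p"

lemma cpoly_pCons: "cpoly (pCons a p) = pCons (of_real a) (cpoly p)"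
  by (simp add: map_poly_pCons)

lemma cpoly_add: "cpoly (p + q) = cpoly p + cpoly q"
  by (rule poly_eqI) (simp add: coeff_map_poly)

lemma cpoly_mult: "cpoly (p * q) = cpoly p * cpoly q"
  by (rule poly_eqI) (simp add: coeff_map_poly coeff_mult)

lemma cpoly_pcompose: "cpoly (pcompose p q) = pcompose (cpoly p) (cpoly q)"
  by (induction p) (simp_all add: cpoly_pCons pcompose_pCons cpoly_add cpoly_mult)

lemma poly_cpoly_of_real: "poly (cpoly p) (of_real x) = of_real (poly p x)"
  by (induction p) (simp_all add: cpoly_pCons)

lemma cpoly_eq_0_iff: "cpoly p = 0 \<longleftrightarrow> p = 0"
  by (rule map_poly_eq_0_iff) auto

lemma exists_separating_multiplier:
  fixes f g :: "complex poly" and \<alpha> \<beta> :: complex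
  assumes "f \<noteq> 0" "g \<noteq> 0"
  obtains c :: nat where "\<And>\<rho>. poly g \<rho> = 0 \<Longrightarrow> poly f (\<alpha> + of_nat c * (\<beta> - \<rho>)) = 0 \<Longrightarrow> \<rho> = \<beta>"
proof -
  define bad where
    "bad = (\<lambda>(\<sigma>, \<rho>). (\<sigma> - \<alpha>) / (\<beta> - \<rho>)) ` ({\<sigma>. poly f \<sigma> = 0} \<times> {\<rho>. poly g \<rho> = 0})"
  have "finite bad"
    unfolding bad_def using assms by (simp add: poly_roots_finite)
  then have "finite (of_nat -` bad :: nat set)"
    by (rule finite_vimageI) (simp add: inj_on_def)
  then obtain c :: nat where c: "of_nat c \<notin> bad"
    using ex_new_if_finite[OF infinite_UNIV_nat] by blast
  have "\<rho> = \<beta>" if "poly g \<rho> = 0" "poly f (\<alpha> + of_nat c * (\<beta> - \<rho>)) = 0" for \<rho>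
  proof (rule ccontr)
    assume "\<rho> \<noteq> \<beta>"
    then have "of_nat c = ((\<alpha> + of_nat c * (\<beta> - \<rho>)) - \<alpha>) / (\<beta> - \<rho>)"
      by simp
    then have "of_nat c \<in> bad"
      unfolding bad_def using that by (auto intro!: image_eqI[of _ _ "(\<alpha> + of_nat c * (\<beta> - \<rho>), \<rho>)"])
    then show False using c by blast
  qed
  then show thesis by (rule that)
qed

lemma common_root_in_subfield:
  assumes F: "real_subfield F" and over: "poly_over F g" "poly_over F h" and "g \<noteq> 0"
    and roots: "poly g \<beta> = 0" "poly h \<beta> = 0" and simple: "poly (pderiv g) \<beta> \<noteq> 0"
    and unique: "\<And>\<rho>. poly (cpoly g) \<rho> = 0 \<Longrightarrow> poly (cpoly h) \<rho> = 0 \<Longrightarrow> \<rho> = of_real \<beta>"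
  shows "\<beta> \<in> F"
proof -
  define r where "r = [:-\<beta>, 1:]"
  define D where "D = gcd g h"
  have "r dvd D"
    unfolding D_def r_def using roots by (simp add: poly_eq_0_iff_dvd)
  then obtain E where DE: "D = r * E" by (elim dvdE)
  have "D dvd g" "D dvd h" "D \<noteq> 0"
    unfolding D_def using \<open>g \<noteq> 0\<close> by simp_all
  \<comment> \<open>a complex root of \<open>E\<close> would be a second common root, or make \<open>\<beta>\<close> a double root of \<open>g\<close>\<close>
  have "degree E = 0"
  proof (rule ccontr)
    assume "degree E \<noteq> 0"
    then obtain \<rho> where \<rho>: "poly (cpoly E) \<rho> = 0"
      using fundamental_theorem_of_algebra by (metis constant_degree degree_map_poly of_real_eq_0_iff)
    have root_of_multiple: "poly (cpoly q) \<rho> = 0" if "D dvd q" for q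
      using that \<rho> unfolding DE by (auto elim!: dvdE simp: cpoly_mult)
    have "\<rho> = of_real \<beta>"
      using unique root_of_multiple \<open>D dvd g\<close> \<open>D dvd h\<close> by blast
    then have "r dvd E"
      using \<rho> poly_cpoly_of_real[of E \<beta>] unfolding r_def by (simp add: poly_eq_0_iff_dvd)
    then obtain E' where "E = r * E'"
      by (elim dvdE)
    moreover obtain k where "g = D * k"
      using \<open>D dvd g\<close> by (elim dvdE)
    ultimately have "g = r * (r * (E' * k))"
      unfolding DE by (simp add: ac_simps)
    moreover have "poly r \<beta> = 0"
      unfolding r_def by simp
    ultimately have "poly (pderiv g) \<beta> = 0"
      by (simp add: pderiv_mult)
    then show False using simple by contradiction
  qed
  then obtain e where "E = [:e:]" by (meson degree0_coeffs)
  then have "\<beta> = - (coeff D 0 / coeff D 1)"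
    using \<open>D \<noteq> 0\<close> unfolding DE r_def by auto
  moreover have "poly_over F D"
    unfolding D_def using F over by (rule poly_over_gcd)
  then have "coeff D 0 \<in> F" "coeff D 1 \<in> F"
    unfolding poly_over_def by blast+
  ultimately show ?thesis
    using F by (simp add: subfield_divide subfield_uminus)
qed

lemma primitive_element_pair:
  assumes "algebraic \<alpha>" "algebraic \<beta>"
  shows "\<exists>c\<in>\<rat>. gen_field {\<alpha>, \<beta>} = gen_field {\<alpha> + c * \<beta>}"
proof -
  obtain f where f: "poly_over \<rat> f" "f \<noteq> 0" "poly f \<alpha> = 0"
    using assms(1) unfolding algebraic_altdef poly_over_def by blast
  obtain g where g: "poly_over \<rat> g" "g \<noteq> 0" "poly g \<beta> = 0" "poly (pderiv g) \<beta> \<noteq> 0"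
    by (rule exists_rat_poly_simple_root[OF assms(2)])
  have nonzero: "cpoly f \<noteq> 0" "cpoly g \<noteq> 0"
    using f(2) g(2) by (simp_all add: cpoly_eq_0_iff)
  obtain k :: nat where k: "\<And>\<rho>. poly (cpoly g) \<rho> = 0 \<Longrightarrow>
      poly (cpoly f) (of_real \<alpha> + of_nat k * (of_real \<beta> - \<rho>)) = 0 \<Longrightarrow> \<rho> = of_real \<beta>"
    by (elim exists_separating_multiplier[OF nonzero, where \<alpha> = "of_real \<alpha>" and \<beta> = "of_real \<beta>"])
  define c where "c = real k"
  define \<gamma> where "\<gamma> = \<alpha> + c * \<beta>"
  define S where "S = gen_field {\<gamma>}"
  have S: "real_subfield S"
    unfolding S_def by (rule real_subfield_gen_field)
  have "\<gamma> \<in> S"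
    unfolding S_def using subset_gen_field[of "{\<gamma>}"] by simp
  have "c \<in> S"
    unfolding c_def by (rule subfield_of_nat[OF S])
  \<comment> \<open>by the choice of \<open>k\<close>, \<open>\<beta>\<close> is the only common root of \<open>g\<close> and \<open>h(X) = f(\<gamma> - c X)\<close>\<close>
  define h where "h = pcompose f [:\<gamma>, -c:]"
  have "poly_over S [:\<gamma>, -c:]"
    by (intro poly_over_pCons[OF S] poly_over_0[OF S] subfield_uminus[OF S] \<open>\<gamma> \<in> S\<close> \<open>c \<in> S\<close>)
  then have h_over: "poly_over S h"
    unfolding h_def by (rule poly_over_pcompose[OF S poly_over_Rats[OF S f(1)]])
  have h_root: "poly h \<beta> = 0"
    unfolding h_def by (simp add: poly_pcompose \<gamma>_def f(3))
  have unique: "\<rho> = of_real \<beta>" if "poly (cpoly g) \<rho> = 0" "poly (cpoly h) \<rho> = 0" for \<rho>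
  proof -
    have "poly (cpoly h) \<rho> = poly (cpoly f) (of_real \<gamma> - of_real c * \<rho>)"
      unfolding h_def cpoly_pcompose by (simp add: cpoly_pCons poly_pcompose mult.commute)
    also have "of_real \<gamma> - of_real c * \<rho> = of_real \<alpha> + of_nat k * (of_real \<beta> - \<rho>)"
      unfolding \<gamma>_def c_def by (simp add: right_diff_distrib)
    finally show ?thesis
      using that k by simp
  qed
  have "\<beta> \<in> S"
    using common_root_in_subfield[OF S poly_over_Rats[OF S g(1)] h_over g(2,3) h_root g(4) unique] .
  moreover have "\<alpha> = \<gamma> - c * \<beta>"
    unfolding \<gamma>_def by simp
  ultimately have "\<alpha> \<in> S"
    using subfield_diff[OF S \<open>\<gamma> \<in> S\<close> subfield_mult[OF S \<open>c \<in> S\<close> \<open>\<beta> \<in> S\<close>]] by simp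
  then have "gen_field {\<alpha>, \<beta>} \<subseteq> S"
    using \<open>\<beta> \<in> S\<close> gen_field_subset_iff[OF S] by simp
  moreover have "S \<subseteq> gen_field {\<alpha>, \<beta>}"
  proof -
    have T: "real_subfield (gen_field {\<alpha>, \<beta>})"
      by (rule real_subfield_gen_field)
    have "\<alpha> \<in> gen_field {\<alpha>, \<beta>}" "\<beta> \<in> gen_field {\<alpha>, \<beta>}"
      using subset_gen_field[of "{\<alpha>, \<beta>}"] by auto
    then have "\<gamma> \<in> gen_field {\<alpha>, \<beta>}"
      unfolding \<gamma>_def c_def by (intro subfield_add[OF T] subfield_mult[OF T] subfield_of_nat[OF T])
    then show ?thesis
      unfolding S_def using gen_field_subset_iff[OF T] by simp
  qed
  ultimately have "gen_field {\<alpha>, \<beta>} = gen_field {\<alpha> + real k * \<beta>}"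
    unfolding S_def \<gamma>_def c_def by (rule subset_antisym)
  then show ?thesis
    by (intro bexI[of _ "real k"]) simp_all
qed

global_interpretation rat_vs: vector_space "\<lambda>(q::rat) (x::real). of_rat q * x"
  by unfold_locales (auto simp: of_rat_add of_rat_mult algebra_simps)

lemma real_subfield_imp_subspace:
  assumes F: "real_subfield F"
  shows "rat_vs.subspace F"
  unfolding rat_vs.subspace_def
  using subfield_zero[OF F] subfield_add[OF F] subfield_mult[OF F] subfield_Rats[OF F Rats_of_rat]
  by blast

lemma real_number_field_eq_span:
  assumes "real_number_field K"
  obtains B where "finite B" "B \<subseteq> K" "K = rat_vs.span B"
proof -
  obtain B where B: "finite B" "B \<subseteq> K"
    and K: "K = {r. \<exists>c. (\<forall>s\<in>B. c s \<in> \<rat>) \<and> r = (\<Sum>s\<in>B. c s * s)}"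
    using assms unfolding real_number_field_def by blast
  have "K = range (\<lambda>u. \<Sum>s\<in>B. of_rat (u s) * s)"
  proof (intro equalityI subsetI)
    fix r assume "r \<in> K"
    then obtain c where c: "\<forall>s\<in>B. c s \<in> \<rat>" "r = (\<Sum>s\<in>B. c s * s)"
      unfolding K by blast
    have rational: "\<forall>s\<in>B. \<exists>q. c s = of_rat q"
      using c(1) by (auto elim!: Rats_cases)
    obtain u where u: "\<forall>s\<in>B. c s = of_rat (u s)"
      using bchoice[OF rational] by blast
    have "r = (\<Sum>s\<in>B. of_rat (u s) * s)"
      unfolding c(2) using u by (intro sum.cong) simp_all
    then show "r \<in> range (\<lambda>u. \<Sum>s\<in>B. of_rat (u s) * s)"
      by blast
  next
    fix r assume "r \<in> range (\<lambda>u. \<Sum>s\<in>B. of_rat (u s) * s)"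
    then obtain u where "r = (\<Sum>s\<in>B. of_rat (u s) * s)"
      by blast
    then show "r \<in> K"
      unfolding K by (intro CollectI exI[of _ "\<lambda>s. of_rat (u s)"]) simp
  qed
  then show thesis
    using that B by (simp add: rat_vs.span_finite)
qed

lemma algebraic_if_powers_in_finite_span:
  assumes "finite B" and powers: "\<And>n. x ^ n \<in> rat_vs.span B"
  shows "algebraic x"
proof (cases "inj_on (\<lambda>k. x ^ k) {0..card B}")
  case False
  then obtain i j where "i \<noteq> j" "x ^ i = x ^ j"
    unfolding inj_on_def by blast
  then show ?thesis
    unfolding algebraic_altdef
    by (intro exI[of _ "monom 1 j - monom 1 i"])
       (auto simp: coeff_monom poly_monom poly_eq_iff intro: exI[of _ j])
next
  case True
  define P where "P = (\<lambda>k. x ^ k) ` {0..card B}"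
  have "card P = Suc (card B)"
    unfolding P_def using True by (simp add: card_image)
  then have "rat_vs.dependent P"
    using rat_vs.independent_span_bound[OF assms(1), of P] powers unfolding P_def by auto
  then obtain T u where T: "finite T" "T \<subseteq> P" "(\<Sum>v\<in>T. of_rat (u v) * v) = 0" "\<exists>v\<in>T. u v \<noteq> 0"
    unfolding rat_vs.dependent_explicit by blast
  define I where "I = {k \<in> {0..card B}. x ^ k \<in> T}"
  have T_image: "T = (\<lambda>k. x ^ k) ` I" and inj: "inj_on (\<lambda>k. x ^ k) I"
    using T(2) True unfolding I_def P_def by (auto intro: inj_on_subset)
  define p :: "real poly" where "p = (\<Sum>k\<in>I. monom (of_rat (u (x ^ k))) k)"
  have coeff_p: "coeff p j = (if j \<in> I then of_rat (u (x ^ j)) else 0)" for j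
    unfolding p_def coeff_sum coeff_monom I_def by (simp add: sum.delta)
  have "p \<noteq> 0"
    using T(4) unfolding T_image by (auto simp: poly_eq_iff coeff_p)
  moreover have "poly p x = (\<Sum>v\<in>T. of_rat (u v) * v)"
    unfolding p_def T_image by (simp add: poly_sum poly_monom sum.reindex[OF inj])
  ultimately show ?thesis
    unfolding algebraic_altdef using T(3) by (intro exI[of _ p]) (simp add: coeff_p)
qed

lemma gen_field_finite_eq_simple:
  assumes K: "real_subfield K" and alg: "\<And>x. x \<in> K \<Longrightarrow> algebraic x"
  shows "finite B \<Longrightarrow> B \<subseteq> K \<Longrightarrow> \<exists>\<theta>. gen_field B = gen_field {\<theta>}"
proof (induction B rule: finite_induct)
  case empty
  have "0 \<in> gen_field {}"
    by (rule subfield_zero[OF real_subfield_gen_field])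
  then have "gen_field {0} = gen_field {}"
    unfolding gen_field_eq_hull by (rule hull_redundant)
  then show ?case by blast
next
  case (insert b B)
  then obtain \<theta> where \<theta>: "gen_field B = gen_field {\<theta>}" by auto
  have "\<theta> \<in> K"
    using \<theta> subset_gen_field[of "{\<theta>}"] gen_field_subset_iff[OF K, of B] insert.prems by auto
  moreover have "b \<in> K"
    using insert.prems by simp
  ultimately obtain c where c: "gen_field {\<theta>, b} = gen_field {\<theta> + c * b}"
    using primitive_element_pair[OF alg[OF \<open>\<theta> \<in> K\<close>] alg[OF \<open>b \<in> K\<close>]] by blast
  have "gen_field (insert b B) = real_subfield hull ({b} \<union> real_subfield hull B)"
    unfolding gen_field_eq_hull using hull_Un_right[of real_subfield "{b}" B] by simp
  also have "\<dots> = real_subfield hull ({b} \<union> real_subfield hull {\<theta>})"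
    using \<theta> unfolding gen_field_eq_hull by simp
  also have "\<dots> = gen_field {\<theta>, b}"
    unfolding gen_field_eq_hull using hull_Un_right[of real_subfield "{b}" "{\<theta>}"]
    by (simp add: insert_commute)
  finally show ?case
    using c by (intro exI[of _ "\<theta> + c * b"]) simp
qed

theorem primitive_element:
  assumes "real_number_field K"
  shows "\<exists>\<theta>\<in>K. K = gen_field {\<theta>}"
proof -
  have K: "real_subfield K"
    using assms by (rule real_number_field_imp_subfield)
  obtain B where B: "finite B" "B \<subseteq> K" "K = rat_vs.span B"
    by (rule real_number_field_eq_span[OF assms])
  have "algebraic x" if "x \<in> K" for x
    using subfield_power[OF K that] B(3) by (intro algebraic_if_powers_in_finite_span[OF B(1)]) simp
  then have "\<exists>\<theta>. gen_field B = gen_field {\<theta>}"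
    by (rule gen_field_finite_eq_simple[OF K _ B(1,2)])
  then obtain \<theta> where \<theta>: "gen_field B = gen_field {\<theta>}" ..
  have "gen_field B \<subseteq> K"
    using B(2) gen_field_subset_iff[OF K] by blast
  moreover have "K \<subseteq> gen_field B"
    unfolding B(3)
    by (rule rat_vs.span_minimal[OF subset_gen_field real_subfield_imp_subspace[OF real_subfield_gen_field]])
  ultimately have "K = gen_field B"
    by (rule antisym[rotated])
  then have "K = gen_field {\<theta>}"
    using \<theta> by simp
  moreover have "\<theta> \<in> gen_field {\<theta>}"
    using subset_gen_field[of "{\<theta>}"] by blast
  ultimately show ?thesis
    by (intro bexI[of _ \<theta>]) simp_all
qed

section \<open>The construction\<close>

lemma exists_conic_point:
  fixes a :: real
  assumes F: "real_subfield F" and "a \<in> F" "a > 0"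
  obtains z u where "z \<in> F" "u \<in> F" "u \<in> gen_field {z}" "z > 2" "u > 0" "z\<^sup>2 - 4 = a * u\<^sup>2"
proof -
  obtain N :: nat where N: "1 / a < real N"
    using reals_Archimedean2 by blast
  have "0 < 1 / a"
    using \<open>a > 0\<close> by simp
  then have "0 < real N"
    using N by linarith
  then have "N \<ge> 1"
    by simp
  then have "real N \<ge> 1"
    by simp
  define A where "A = a * (real N)\<^sup>2"
  have "1 < a * real N"
    using N \<open>a > 0\<close> by (simp add: field_simps)
  also have "\<dots> \<le> A"
    unfolding A_def using \<open>real N \<ge> 1\<close> \<open>a > 0\<close> by (simp add: power2_eq_square)
  finally have "A > 1" .
  \<comment> \<open>\<open>z\<^sup>2 - 4 = 16 A / (A - 1)\<^sup>2\<close>, which is \<open>a\<close> times a square\<close>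
  define z where "z = 2 * (A + 1) / (A - 1)"
  define u where "u = real N * (z - 2)"
  have "z - 2 = 4 / (A - 1)"
    unfolding z_def using \<open>A > 1\<close> by (simp add: field_simps)
  moreover have "4 / (A - 1) > 0"
    using \<open>A > 1\<close> by simp
  ultimately have "z > 2"
    by linarith
  then have "u > 0"
    unfolding u_def using \<open>real N \<ge> 1\<close> by simp
  have "z + 2 = 4 * A / (A - 1)"
    unfolding z_def using \<open>A > 1\<close> by (simp add: field_simps)
  have "z\<^sup>2 - 4 = (z - 2) * (z + 2)"
    by (simp add: power2_eq_square algebra_simps)
  also have "\<dots> = a * u\<^sup>2"
    unfolding u_def \<open>z - 2 = 4 / (A - 1)\<close> \<open>z + 2 = 4 * A / (A - 1)\<close> A_def
    by (simp add: power2_eq_square)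
  finally have conic: "z\<^sup>2 - 4 = a * u\<^sup>2" .
  have "z \<in> F"
    unfolding z_def A_def using F \<open>a \<in> F\<close> by (auto intro!: subfield_closed)
  moreover have "u \<in> F" "u \<in> gen_field {z}"
    unfolding u_def using F \<open>z \<in> F\<close> real_subfield_gen_field subset_gen_field[of "{z}"]
    by (auto intro!: subfield_closed)
  ultimately show thesis
    using \<open>z > 2\<close> \<open>u > 0\<close> conic by (rule that)
qed

lemma exists_rat_translate_near_ellipse:
  fixes a c \<delta> \<theta> :: real
  assumes "a > 0" "c > 0" "\<delta> > 0"
  obtains n m where "n - \<theta> \<in> \<rat>" "m \<in> \<rat>" "0 < m" "m \<le> 1" "0 < n"
    "0 < n\<^sup>2 + c * m\<^sup>2 - a" "n\<^sup>2 + c * m\<^sup>2 - a < \<delta> * m"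
proof -
  obtain m where m: "m \<in> \<rat>" "0 < m" "m < min 1 (sqrt (a / c))"
    using Rats_dense_in_real[of 0 "min 1 (sqrt (a / c))"] assms by auto
  have "m\<^sup>2 < (sqrt (a / c))\<^sup>2"
    using m by (intro power_strict_mono) auto
  then have "m\<^sup>2 < a / c"
    using assms by simp
  then have L: "a - c * m\<^sup>2 > 0"
    using \<open>c > 0\<close> by (simp add: field_simps)
  have "sqrt (a - c * m\<^sup>2) - \<theta> < sqrt (a - c * m\<^sup>2 + \<delta> * m) - \<theta>"
    using m(2) assms(3) by simp
  then obtain q where q: "q \<in> \<rat>" "sqrt (a - c * m\<^sup>2) - \<theta> < q" "q < sqrt (a - c * m\<^sup>2 + \<delta> * m) - \<theta>"
    using Rats_dense_in_real by blast
  define n where "n = \<theta> + q"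
  have n_bounds: "sqrt (a - c * m\<^sup>2) < n" "n < sqrt (a - c * m\<^sup>2 + \<delta> * m)"
    unfolding n_def using q by auto
  moreover have "0 < sqrt (a - c * m\<^sup>2)"
    using L by simp
  ultimately have "0 < n"
    by linarith
  have "(sqrt (a - c * m\<^sup>2))\<^sup>2 < n\<^sup>2" "n\<^sup>2 < (sqrt (a - c * m\<^sup>2 + \<delta> * m))\<^sup>2"
    using power_strict_mono[OF n_bounds(1), of 2] power_strict_mono[OF n_bounds(2), of 2]
      \<open>0 < n\<close> \<open>0 < sqrt (a - c * m\<^sup>2)\<close> by simp_all
  then have "a - c * m\<^sup>2 < n\<^sup>2" "n\<^sup>2 < a - c * m\<^sup>2 + \<delta> * m"
    using L m(2) assms(3) by simp_all
  then show thesis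
    using that[of n m] n_def q(1) m \<open>0 < n\<close> by auto
qed

lemma exists_isotropic_vector_pos:
  fixes a c u \<theta> :: real
  assumes F: "real_subfield F" and "a \<in> F" "c \<in> F" "u \<in> F" "\<theta> \<in> F"
    and "a > 0" "c > 0" "u > 0"
  obtains x y W where "x \<in> F" "y \<in> F" "W \<in> F" "x\<^sup>2 - a * y\<^sup>2 + a * u\<^sup>2 + c * W\<^sup>2 = 0"
    "x > 0" "y / u > 2" "c * W\<^sup>2 > 4" "\<theta> \<in> gen_field {x, y / u, u}"
proof -
  obtain n m where nm: "n - \<theta> \<in> \<rat>" "m \<in> \<rat>" "0 < m" "m \<le> 1" "0 < n"
    and D_pos: "0 < n\<^sup>2 + c * m\<^sup>2 - a"
    and D_small: "n\<^sup>2 + c * m\<^sup>2 - a < min (2 * a) (a * u * sqrt c) * m"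
    using exists_rat_translate_near_ellipse[of a c "min (2 * a) (a * u * sqrt c)" \<theta>] assms by auto
  define D where "D = n\<^sup>2 + c * m\<^sup>2 - a"
  define p where "p = 2 * a * u / D"
  define x where "x = n * p"
  define y where "y = u + p"
  define W where "W = m * p"
  have "D > 0" "p > 0"
    unfolding p_def D_def using D_pos assms by simp_all
  have "min (2 * a) (a * u * sqrt c) * m \<le> min (2 * a) (a * u * sqrt c)"
    using nm(4) assms by (intro mult_left_le) auto
  then have "D < 2 * a"
    using D_small unfolding D_def by linarith
  have "min (2 * a) (a * u * sqrt c) * m \<le> a * u * sqrt c * m"
    using nm(3) by (intro mult_right_mono) auto
  then have "D < a * u * sqrt c * m"
    using D_small unfolding D_def by linarith
  have "n \<in> F" "m \<in> F"
    using nm subfield_Rats[OF F] subfield_add[OF F \<open>\<theta> \<in> F\<close>, of "n - \<theta>"] by auto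
  then have "p \<in> F"
    unfolding p_def D_def using F assms by (auto intro!: subfield_closed)
  have "x\<^sup>2 - a * y\<^sup>2 + a * u\<^sup>2 + c * W\<^sup>2 = p * (p * D - 2 * a * u)"
    unfolding x_def y_def W_def D_def by (simp add: power2_eq_square algebra_simps)
  also have "\<dots> = 0"
    unfolding p_def using \<open>D > 0\<close> by simp
  finally have equation: "x\<^sup>2 - a * y\<^sup>2 + a * u\<^sup>2 + c * W\<^sup>2 = 0" .
  have "y / u = 1 + 2 * a / D"
    unfolding y_def p_def using \<open>u > 0\<close> by (simp add: field_simps)
  moreover have "2 * a / D > 1"
    using \<open>D > 0\<close> \<open>D < 2 * a\<close> by simp
  ultimately have "y / u > 2"
    by linarith
  have "sqrt c * W = 2 * (a * u * sqrt c * m / D)"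
    unfolding W_def p_def by (simp add: field_simps)
  moreover have "a * u * sqrt c * m / D > 1"
    using \<open>D > 0\<close> \<open>D < a * u * sqrt c * m\<close> by simp
  ultimately have "sqrt c * W > 2"
    by linarith
  then have "(sqrt c * W)\<^sup>2 > 2\<^sup>2"
    by (intro power_strict_mono) auto
  then have "c * W\<^sup>2 > 4"
    using \<open>c > 0\<close> by (simp add: power_mult_distrib)
  define G where "G = gen_field {x, y / u, u}"
  have G: "real_subfield G" and "x \<in> G" "y / u \<in> G" "u \<in> G"
    unfolding G_def using real_subfield_gen_field subset_gen_field[of "{x, y / u, u}"] by auto
  have "\<theta> = x / ((y / u - 1) * u) - (n - \<theta>)"
    unfolding x_def y_def using \<open>p > 0\<close> \<open>u > 0\<close> by (simp add: field_simps)
  then have "\<theta> \<in> G"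
    using G \<open>x \<in> G\<close> \<open>y / u \<in> G\<close> \<open>u \<in> G\<close> subfield_Rats[OF G nm(1)]
    by (metis subfield_diff subfield_divide subfield_mult subfield_one)
  show thesis
    using that[of x y W] F assms \<open>n \<in> F\<close> \<open>p \<in> F\<close> \<open>m \<in> F\<close> equation \<open>y / u > 2\<close> \<open>c * W\<^sup>2 > 4\<close>
      \<open>\<theta> \<in> G\<close> \<open>p > 0\<close> nm(5)
    unfolding x_def y_def W_def G_def by (auto intro: subfield_closed)
qed

lemma exists_isotropic_vector:
  fixes a b u \<theta> :: real
  assumes F: "real_subfield F" and "a \<in> F" "b \<in> F" "u \<in> F" "\<theta> \<in> F"
    and "a > 0" "b \<noteq> 0" "u > 0"
  obtains x y v w where "x \<in> F" "y \<in> F" "v \<in> F" "w \<in> F"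
    "x\<^sup>2 - a * y\<^sup>2 + a * u\<^sup>2 - b * v\<^sup>2 + a * b * w\<^sup>2 = 0"
    "x > 0" "y / u > 2" "a * b * w\<^sup>2 - b * v\<^sup>2 > 4" "\<theta> \<in> gen_field {x, y / u, u}"
proof -
  \<comment> \<open>only one of \<open>v\<close>, \<open>w\<close> is needed: \<open>a b w\<^sup>2 - b v\<^sup>2\<close> becomes \<open>c W\<^sup>2\<close>\<close>
  define c where "c = (if b > 0 then a * b else - b)"
  have "c \<in> F" "c > 0"
    unfolding c_def using assms subfield_mult[OF F] subfield_uminus[OF F]
    by (simp_all add: zero_less_mult_iff)
  obtain x y W where "x \<in> F" "y \<in> F" "W \<in> F" and form: "x\<^sup>2 - a * y\<^sup>2 + a * u\<^sup>2 + c * W\<^sup>2 = 0"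
    and "x > 0" "y / u > 2" "c * W\<^sup>2 > 4" and \<theta>: "\<theta> \<in> gen_field {x, y / u, u}"
    by (rule exists_isotropic_vector_pos[OF F \<open>a \<in> F\<close> \<open>c \<in> F\<close> \<open>u \<in> F\<close> \<open>\<theta> \<in> F\<close>
        \<open>a > 0\<close> \<open>c > 0\<close> \<open>u > 0\<close>])
  define v where "v = (if b > 0 then 0 else W)"
  define w where "w = (if b > 0 then W else 0)"
  have vw: "a * b * w\<^sup>2 - b * v\<^sup>2 = c * W\<^sup>2"
    unfolding v_def w_def c_def by auto
  have "v \<in> F" "w \<in> F"
    unfolding v_def w_def using \<open>W \<in> F\<close> subfield_zero[OF F] by simp_all
  moreover have "x\<^sup>2 - a * y\<^sup>2 + a * u\<^sup>2 - b * v\<^sup>2 + a * b * w\<^sup>2 = 0"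
    using form vw by simp
  moreover have "a * b * w\<^sup>2 - b * v\<^sup>2 > 4"
    using vw \<open>c * W\<^sup>2 > 4\<close> by simp
  ultimately show thesis
    using \<open>x \<in> F\<close> \<open>y \<in> F\<close> \<open>x > 0\<close> \<open>y / u > 2\<close> \<theta> by (intro that)
qed

theorem theorem3p1:
  fixes K :: "real set" and a b :: real
  assumes "real_number_field K" and "a \<in> K" and "b \<in> K" and "a > 0" and "b \<noteq> 0"
  shows "\<exists>x y z u v w.
           x \<in> K \<and> y \<in> K \<and> z \<in> K \<and> u \<in> K \<and> v \<in> K \<and> w \<in> K \<and>
           x^2 - a * y^2 + a * u^2 - b * v^2 + a * b * w^2 = 0 \<and>
           z^2 - 4 = a * u^2 \<and>
           gen_field {x, y / u, z} = K \<and>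
           u \<noteq> 0 \<and> x + y * z / (2 * u) > 2 \<and> y / u > 1 \<and> z > 2 \<and>
           a * b * w^2 - b * v^2 > 4"
proof -
  have K: "real_subfield K"
    using assms(1) by (rule real_number_field_imp_subfield)
  from primitive_element[OF assms(1)] obtain \<theta> where "\<theta> \<in> K" and K_eq: "K = gen_field {\<theta>}" ..
  obtain z u where "z \<in> K" "u \<in> K" and u: "u \<in> gen_field {z}"
    and "z > 2" "u > 0" and conic: "z\<^sup>2 - 4 = a * u\<^sup>2"
    by (rule exists_conic_point[OF K \<open>a \<in> K\<close> \<open>a > 0\<close>])
  obtain x y v w where "x \<in> K" "y \<in> K" "v \<in> K" "w \<in> K"
    and equation: "x\<^sup>2 - a * y\<^sup>2 + a * u\<^sup>2 - b * v\<^sup>2 + a * b * w\<^sup>2 = 0"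
    and "x > 0" "y / u > 2" and "a * b * w\<^sup>2 - b * v\<^sup>2 > 4" and \<theta>: "\<theta> \<in> gen_field {x, y / u, u}"
    by (rule exists_isotropic_vector[OF K \<open>a \<in> K\<close> \<open>b \<in> K\<close> \<open>u \<in> K\<close> \<open>\<theta> \<in> K\<close>
        \<open>a > 0\<close> \<open>b \<noteq> 0\<close> \<open>u > 0\<close>])
  have "u \<in> gen_field {x, y / u, z}"
    using u gen_field_mono[of "{z}" "{x, y / u, z}"] by blast
  then have "\<theta> \<in> gen_field {x, y / u, z}"
    using gen_field_subsetD[OF \<theta> _ real_subfield_gen_field] subset_gen_field[of "{x, y / u, z}"] by simp
  then have generated: "gen_field {x, y / u, z} = K"
    using gen_field_eq_if_generator[OF K K_eq] \<open>x \<in> K\<close> \<open>z \<in> K\<close> subfield_divide[OF K \<open>y \<in> K\<close> \<open>u \<in> K\<close>]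
    by simp
  have "y / u * z / 2 > 2 * 2 / 2"
    using mult_strict_mono[of 2 "y / u" 2 z] \<open>y / u > 2\<close> \<open>z > 2\<close> by (intro divide_strict_right_mono) auto
  moreover have "y * z / (2 * u) = y / u * z / 2"
    by simp
  ultimately have "x + y * z / (2 * u) > 2"
    using \<open>x > 0\<close> by linarith
  have "u \<noteq> 0" "y / u > 1"
    using \<open>u > 0\<close> \<open>y / u > 2\<close> by linarith+
  show ?thesis
    by (intro exI[of _ x] exI[of _ y] exI[of _ z] exI[of _ u] exI[of _ v] exI[of _ w] conjI)
       (fact \<open>x \<in> K\<close> \<open>y \<in> K\<close> \<open>z \<in> K\<close> \<open>u \<in> K\<close> \<open>v \<in> K\<close> \<open>w \<in> K\<close>
         equation conic generated \<open>u \<noteq> 0\<close> \<open>x + y * z / (2 * u) > 2\<close> \<open>y / u > 1\<close>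
         \<open>z > 2\<close> \<open>a * b * w\<^sup>2 - b * v\<^sup>2 > 4\<close>)+
qed

end
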